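(* Let $\mathcal P$ and $\mathrm{conv}(\mathcal P)$ be as in the context. Let $k\in[1,T-1]_{\mathbb Z}$ with $\overline C-\underline C-kV>0$, $m\in[0,k-1]_{\mathbb Z}$, and $\mathcal S\subseteq[0,\min\{k-1,L-m-1\}]_{\mathbb Z}$. For any $t\in[k+1,T-m]_{\mathbb Z}$, the inequality $$x_t-x_{t-k}\le(\underline C+(k-m)V)y_t+V\sum_{i=1}^m y_{t+i}-\underline C y_{t-k}-\sum_{s\in\mathcal S}(\underline C+(k-s)V-\overline V)(y_{t-s}-y_{t-s-1})\qquad(\ast)$$ is valid for $\mathrm{conv}(\mathcal P)$. For any $t\in[m+1,T-k]_{\mathbb Z}$, the inequality $$x_t-x_{t+k}\le(\underline C+(k-m)V)y_t+V\sum_{i=1}^m y_{t-i}-\underline C y_{t+k}-\sum_{s\in\mathcal S}(\underline C+(k-s)V-\overline V)(y_{t+s}-y_{t+s+1})\qquad(\ast\ast)$$ is valid for $\mathrm{conv}(\mathcal P)$. Furthermore, $(\ast)$ and $(\ast\ast)$ are facet-defining for $\mathrm{conv}(\mathcal P)$ when $m=0$ and $s\ge\min\{k-1,1\}$ for all $s\in\mathcal S$.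
   Context: For integers $a,b$, $[a,b]_{\mathbb Z}=\{a,a+1,\dots,b\}$ if $a\le b$ and $\emptyset$ otherwise. Fix a positive integer $T$, positive integers $L$ (minimum up time) and $\ell$ (minimum down time), and reals $\overline C,\underline C,V,\overline V$ with $\overline C>\underline C>0$, $V>0$, $\overline V+V\le\overline C$ and $\underline C<\overline V<\underline C+V$. $\mathcal P$ is the set of $(\mathbf x,\mathbf y)=((x_1,\dots,x_T),(y_1,\dots,y_T))\in\mathbb R_+^T\times\{0,1\}^T$ satisfying: (i) $-y_{t-1}+y_t-y_k\le 0$ for all $t\in[2,T]_{\mathbb Z}$, $k\in[t,\min\{T,t+L-1\}]_{\mathbb Z}$; (ii) $y_{t-1}-y_t+y_k\le 1$ for all $t\in[2,T]_{\mathbb Z}$, $k\in[t,\min\{T,t+\ell-1\}]_{\mathbb Z}$; (iii) $-x_t+\underline C y_t\le 0$ and $x_t-\overline C y_t\le 0$ for all $t\in[1,T]_{\mathbb Z}$; (iv) $x_t-x_{t-1}\le Vy_{t-1}+\overline V(1-y_{t-1})$ for all $t\in[2,T]_{\mathbb Z}$; (v) $x_{t-1}-x_t\le Vy_t+\overline V(1-y_t)$ for all $t\in[2,T]_{\mathbb Z}$. $\mathrm{conv}(\mathcal P)\subseteq\mathbb R^{2T}$ is its convex hull. A linear inequality is valid for $\mathrm{conv}(\mathcal P)$ if all its points satisfy it, and facet-defining if moreover the set of points of $\mathrm{conv}(\mathcal P)$ satisfying it with equality has dimension $\dim\mathrm{conv}(\mathcal P)-1$. *)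

theory Defs
  imports "HOL-Analysis.Analysis" "HOL-Library.Function_Algebras"
begin

instantiation "fun" :: (type, real_vector) real_vector
begin
definition scaleR_fun :: "real \<Rightarrow> ('a \<Rightarrow> 'b) \<Rightarrow> 'a \<Rightarrow> 'b"
  where "scaleR_fun r f = (\<lambda>x. r *\<^sub>R f x)"
instance
  by standard (auto simp: scaleR_fun_def fun_eq_iff scaleR_add_right scaleR_add_left)
end

definition setdim :: "'a::real_vector set \<Rightarrow> int" where
  "setdim S = (if S = {} then -1 else
     int (GREATEST n. \<exists>B. finite B \<and> B \<subseteq> S \<and> card B = Suc n \<and> \<not> affine_dependent B))"

definition valid_ineq :: "'a set \<Rightarrow> ('a \<Rightarrow> real) \<Rightarrow> ('a \<Rightarrow> real) \<Rightarrow> bool" where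
  "valid_ineq K f g \<longleftrightarrow> (\<forall>p\<in>K. f p \<le> g p)"

definition facet_defining :: "'a::real_vector set \<Rightarrow> ('a \<Rightarrow> real) \<Rightarrow> ('a \<Rightarrow> real) \<Rightarrow> bool" where
  "facet_defining K f g \<longleftrightarrow> valid_ineq K f g \<and> setdim {p\<in>K. f p = g p} = setdim K - 1"

text \<open>A point (x,y) of R^(2T) is represented by two functions nat to real, with
  the coordinates x_1..x_T, y_1..y_T at indices 1..T and all other entries 0.\<close>

definition Pset :: "nat \<Rightarrow> nat \<Rightarrow> nat \<Rightarrow> real \<Rightarrow> real \<Rightarrow> real \<Rightarrow> real
    \<Rightarrow> ((nat \<Rightarrow> real) \<times> (nat \<Rightarrow> real)) set" where
  "Pset T L l Cu Cl V Vb = {(x, y).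
     (\<forall>t. t \<notin> {1..T} \<longrightarrow> x t = 0 \<and> y t = 0) \<and>
     (\<forall>t\<in>{1..T}. x t \<ge> 0 \<and> (y t = 0 \<or> y t = 1)) \<and>
     (\<forall>t\<in>{2..T}. \<forall>k\<in>{t..min T (t + L - 1)}. - y (t - 1) + y t - y k \<le> 0) \<and>
     (\<forall>t\<in>{2..T}. \<forall>k\<in>{t..min T (t + l - 1)}. y (t - 1) - y t + y k \<le> 1) \<and>
     (\<forall>t\<in>{1..T}. - x t + Cl * y t \<le> 0 \<and> x t - Cu * y t \<le> 0) \<and>
     (\<forall>t\<in>{2..T}. x t - x (t - 1) \<le> V * y (t - 1) + Vb * (1 - y (t - 1))) \<and>
     (\<forall>t\<in>{2..T}. x (t - 1) - x t \<le> V * y t + Vb * (1 - y t))}"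

definition lhs1 :: "nat \<Rightarrow> nat \<Rightarrow> (nat \<Rightarrow> real) \<times> (nat \<Rightarrow> real) \<Rightarrow> real" where
  "lhs1 k t p = fst p t - fst p (t - k)"

definition rhs1 :: "real \<Rightarrow> real \<Rightarrow> real \<Rightarrow> nat \<Rightarrow> nat \<Rightarrow> nat set \<Rightarrow> nat
    \<Rightarrow> (nat \<Rightarrow> real) \<times> (nat \<Rightarrow> real) \<Rightarrow> real" where
  "rhs1 Cl V Vb k m S t p =
     (Cl + real (k - m) * V) * snd p t + V * (\<Sum>i=1..m. snd p (t + i)) - Cl * snd p (t - k)
     - (\<Sum>s\<in>S. (Cl + real (k - s) * V - Vb) * (snd p (t - s) - snd p (t - s - 1)))"

definition lhs2 :: "nat \<Rightarrow> nat \<Rightarrow> (nat \<Rightarrow> real) \<times> (nat \<Rightarrow> real) \<Rightarrow> real" where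
  "lhs2 k t p = fst p t - fst p (t + k)"

definition rhs2 :: "real \<Rightarrow> real \<Rightarrow> real \<Rightarrow> nat \<Rightarrow> nat \<Rightarrow> nat set \<Rightarrow> nat
    \<Rightarrow> (nat \<Rightarrow> real) \<times> (nat \<Rightarrow> real) \<Rightarrow> real" where
  "rhs2 Cl V Vb k m S t p =
     (Cl + real (k - m) * V) * snd p t + V * (\<Sum>i=1..m. snd p (t - i)) - Cl * snd p (t + k)
     - (\<Sum>s\<in>S. (Cl + real (k - s) * V - Vb) * (snd p (t + s) - snd p (t + s + 1)))"

end

(* Validity is checked point by point and passes to the convex hull because both sides are
   linear.  At a point with y_t = 1 the unit has either been on since t - k, so ramping gives
   x_t - x_(t-k) <= k V, or it last started up at t - r with r < k, so x_t <= Vb + r V; in the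
   latter case the summand of s = r in the start-up sum pays exactly the difference, and the
   minimum up time keeps the unit on through t + m.  A shut-down before t + m instead bounds
   x_t by ramping down.  The inequality for x_t - x_(t+k) is the same one after reversing time,
   t -> T + 1 - t, which is a linear involution preserving P.

   For facetness, P contains 0 and spans the 2T-dimensional space of points supported on
   {1..T}.  Points of P on the face -- a block of operation ramping up at full speed from t - k
   to t, plateaus at Cl, late start-ups at t - s for s in S, and small perturbations of these --
   span that space together with the x-unit vector at t, so the face has dimension 2T - 1. *)

theory Submission
  imports Defs
begin

section \<open>Dimension and facets of convex hulls\<close>

lemma valid_ineq_convex_hull:
  assumes "linear (\<lambda>p. f p - g p)" and "valid_ineq P f g"
  shows "valid_ineq (convex hull P) f g"
proof -
  have "convex ((\<lambda>p. f p - g p) -` {..0})"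
    by (rule convex_linear_vimage[OF assms(1)]) simp
  moreover have "P \<subseteq> (\<lambda>p. f p - g p) -` {..0}"
    using assms(2) by (auto simp: valid_ineq_def)
  ultimately have "convex hull P \<subseteq> (\<lambda>p. f p - g p) -` {..0}"
    by (rule hull_minimal[rotated])
  then show ?thesis
    by (auto simp: valid_ineq_def)
qed

lemma card_le_dim_span:
  fixes S :: "'a::real_vector set"
  assumes "finite E" and "independent S" and "S \<subseteq> span E"
  shows "finite S" and "card S \<le> dim E"
proof -
  obtain B where B: "B \<subseteq> E" "independent B" "E \<subseteq> span B" "card B = dim E"
    by (rule basis_exists)
  have "S \<subseteq> span B"
    using assms(3) B(3) span_mono span_span by blast
  then show "finite S" "card S \<le> dim E"
    using independent_span_bound[of B S] assms(1,2) B by (auto intro: finite_subset)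
qed

lemma setdim_eqI:
  assumes "K \<noteq> {}"
    and "finite B" "B \<subseteq> K" "card B = Suc n" "\<not> affine_dependent B"
    and "\<And>B. finite B \<Longrightarrow> B \<subseteq> K \<Longrightarrow> \<not> affine_dependent B \<Longrightarrow> card B \<le> Suc n"
  shows "setdim K = int n"
proof -
  have "(GREATEST n. \<exists>B. finite B \<and> B \<subseteq> K \<and> card B = Suc n \<and> \<not> affine_dependent B) = n"
    by (rule Greatest_equality) (use assms in fastforce)+
  then show ?thesis
    unfolding setdim_def using assms(1) by simp
qed

lemma setdim_eq_dim:
  fixes K :: "'a::real_vector set"
  assumes "0 \<in> K" and "K \<subseteq> span E" and "finite E"
  shows "setdim K = int (dim K)"
proof -
  obtain D where D: "D \<subseteq> K" "independent D" "K \<subseteq> span D" "card D = dim K"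
    by (rule basis_exists)
  have "finite D"
    using card_le_dim_span(1)[OF assms(3) D(2)] D(1) assms(2) by blast
  have "0 \<notin> D"
    using D(2) dependent_zero by blast
  show ?thesis
  proof (rule setdim_eqI)
    show "K \<noteq> {}" "finite (insert 0 D)" "insert 0 D \<subseteq> K"
      using assms(1) D(1) \<open>finite D\<close> by auto
    show "card (insert 0 D) = Suc (dim K)"
      using \<open>finite D\<close> \<open>0 \<notin> D\<close> D(4) by simp
    show "\<not> affine_dependent (insert 0 D)"
      using affine_dependent_iff_dependent[OF \<open>0 \<notin> D\<close>] D(2) by simp
  next
    fix B assume B: "finite B" "B \<subseteq> K" "\<not> affine_dependent B"
    show "card B \<le> Suc (dim K)"
    proof (cases "B = {}")
      case False
      then obtain a where a: "a \<in> B" by blast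
      let ?C = "(\<lambda>x. - a + x) ` (B - {a})"
      have "independent ?C"
        using B(3) affine_dependent_iff_dependent2[OF a] by simp
      moreover have "?C \<subseteq> span D"
        using B(2) D(3) a by (force intro: span_diff)
      ultimately have "card ?C \<le> card D"
        using independent_span_bound[OF \<open>finite D\<close>] by blast
      moreover have "card ?C = card B - 1"
        by (simp add: card_image inj_on_def B(1) a)
      ultimately show ?thesis
        using D(4) by linarith
    qed simp
  qed
qed

lemma span_convex_hull: "span (convex hull S) = span S"
proof
  show "span (convex hull S) \<subseteq> span S"
    by (simp add: convex_hull_subset_span span_minimal)
  show "span S \<subseteq> span (convex hull S)"
    by (simp add: hull_subset span_mono)
qed

lemma dim_kernel_section:
  fixes F :: "'a::real_vector set"
  assumes E: "finite E" "F \<subseteq> span E" and h: "linear h" "\<forall>p\<in>F. h p = 0"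
    and w: "w \<in> span E" "h w \<noteq> 0" and spanning: "E \<subseteq> span (insert w F)"
  shows "Suc (dim F) = dim E"
proof -
  obtain D where D: "D \<subseteq> F" "independent D" "F \<subseteq> span D" "card D = dim F"
    by (rule basis_exists)
  have "finite D"
    using card_le_dim_span(1)[OF E(1) D(2)] D(1) E(2) by blast
  have "span D \<subseteq> {p. h p = 0}"
    using D(1) h(2) by (intro span_minimal) (use linear_subspace_kernel[OF h(1)] in auto)
  then have "w \<notin> span D"
    using w(2) by auto
  have "insert w F \<subseteq> span (insert w D)"
    using D(3) span_mono[of D "insert w D"] by (auto intro: span_base)
  then have "E \<subseteq> span (insert w D)"
    using spanning span_minimal[OF _ subspace_span] by (meson subset_trans)
  then have "dim E \<le> card (insert w D)"
    using dim_le_card \<open>finite D\<close> by blast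
  moreover have "card (insert w D) \<le> dim E"
  proof (rule card_le_dim_span(2)[OF E(1)])
    show "independent (insert w D)"
      using independent_insertI[OF \<open>w \<notin> span D\<close> D(2)] .
    show "insert w D \<subseteq> span E"
      using D(1) E(2) w(1) by auto
  qed
  moreover have "card (insert w D) = Suc (dim F)"
    using \<open>w \<notin> span D\<close> span_base[of w D] \<open>finite D\<close> D(4) by (auto simp: card_insert_if)
  ultimately show ?thesis
    by linarith
qed

lemma facet_defining_convex_hullI:
  fixes P :: "'a::real_vector set"
  assumes E: "finite E" "P \<subseteq> span E"
    and "0 \<in> P" and lin: "linear (\<lambda>p. f p - g p)" and valid: "valid_ineq P f g"
    and w: "w \<in> span P" "f w \<noteq> g w"
    and spanning: "E \<subseteq> span (insert w {p\<in>P. f p = g p})"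
  shows "facet_defining (convex hull P) f g"
proof -
  let ?F = "{p \<in> convex hull P. f p = g p}"
  have hull_span: "convex hull P \<subseteq> span E"
    using E(2) subspace_imp_convex[OF subspace_span] by (rule hull_minimal)
  have "0 \<in> convex hull P"
    using \<open>0 \<in> P\<close> hull_subset[of P convex] by blast
  have "span (insert w {p\<in>P. f p = g p}) \<subseteq> span P"
    using w(1) by (intro span_minimal) (auto intro: span_base)
  then have "span P = span E"
    using spanning span_minimal[OF E(2) subspace_span] span_minimal[of E "span P"] by auto
  then have "setdim (convex hull P) = int (dim E)"
    using setdim_eq_dim[OF \<open>0 \<in> convex hull P\<close> hull_span E(1)]
    by (metis span_convex_hull span_eq_dim)
  moreover have "Suc (dim ?F) = dim E"
  proof (rule dim_kernel_section[OF E(1) _ lin])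
    have "span (insert w {p\<in>P. f p = g p}) \<subseteq> span (insert w ?F)"
      using hull_subset[of P convex] by (intro span_mono) auto
    with spanning show "E \<subseteq> span (insert w ?F)"
      by (rule subset_trans)
  qed (use hull_span w \<open>span P = span E\<close> in auto)
  moreover have "setdim ?F = int (dim ?F)"
    using \<open>0 \<in> convex hull P\<close> linear_0[OF lin] hull_span E(1)
    by (intro setdim_eq_dim[of ?F E]) auto
  ultimately have "setdim ?F = setdim (convex hull P) - 1"
    by linarith
  then show ?thesis
    using valid_ineq_convex_hull[OF lin valid] by (simp add: facet_defining_def)
qed

lemma affine_dependent_linear_image:
  assumes "linear f" and "inj_on f S" and "finite S" and "affine_dependent S"
  shows "affine_dependent (f ` S)"
proof -
  obtain U where U: "sum U S = 0" "\<exists>v\<in>S. U v \<noteq> 0" "(\<Sum>v\<in>S. U v *\<^sub>R v) = 0"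
    using assms(3,4) affine_dependent_explicit_finite by blast
  let ?U' = "U \<circ> inv_into S f"
  have "sum ?U' (f ` S) = 0"
    using U(1) assms(2) by (simp add: sum.reindex)
  moreover have "\<exists>v\<in>f ` S. ?U' v \<noteq> 0"
    using U(2) assms(2) by auto
  moreover have "(\<Sum>v\<in>f ` S. ?U' v *\<^sub>R v) = f (\<Sum>v\<in>S. U v *\<^sub>R v)"
    using assms(1,2) by (simp add: sum.reindex linear_sum linear_scale)
  ultimately show ?thesis
    using U(3) linear_0[OF assms(1)] assms(3)
    by (subst affine_dependent_explicit_finite) auto
qed

lemma setdim_involution_image:
  assumes "linear f" and inv: "\<forall>x\<in>K. f (f x) = x"
  shows "setdim (f ` K) = setdim K"
proof -
  have image: "\<exists>B'. finite B' \<and> B' \<subseteq> f ` K' \<and> card B' = Suc n \<and> \<not> affine_dependent B'"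
    if inv': "\<forall>x\<in>K'. f (f x) = x" and B: "finite B" "B \<subseteq> K'" "card B = Suc n" "\<not> affine_dependent B"
    for K' B n
  proof -
    have inj: "inj_on f B"
      using inv' B(2) by (metis inj_on_inverseI subsetD)
    have "f ` f ` B = B"
      using inv' B(2) by (force simp: image_image)
    moreover have "inj_on f (f ` B)"
      using inv' B(2) by (intro inj_on_inverseI[of _ f]) auto
    ultimately have "\<not> affine_dependent (f ` B)"
      using affine_dependent_linear_image[OF assms(1), of "f ` B"] B(1,4) by auto
    then show ?thesis
      using B inj by (intro exI[of _ "f ` B"]) (auto simp: card_image)
  qed
  have "f ` f ` K = K"
    using inv by (force simp: image_image)
  moreover have "\<forall>x\<in>f ` K. f (f x) = x"
    using inv by auto
  ultimately have "(\<exists>B. finite B \<and> B \<subseteq> f ` K \<and> card B = Suc n \<and> \<not> affine_dependent B)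
      \<longleftrightarrow> (\<exists>B. finite B \<and> B \<subseteq> K \<and> card B = Suc n \<and> \<not> affine_dependent B)" for n
    using image[of K] image[of "f ` K"] inv by (metis (no_types, lifting))
  then show ?thesis
    unfolding setdim_def by simp
qed

lemma valid_ineq_compose:
  assumes "\<phi> ` K \<subseteq> K" and "valid_ineq K f g"
  shows "valid_ineq K (f \<circ> \<phi>) (g \<circ> \<phi>)"
  using assms by (auto simp: valid_ineq_def)

lemma facet_defining_compose_involution:
  assumes "linear \<phi>" and "\<phi> ` K \<subseteq> K" and inv: "\<forall>p\<in>K. \<phi> (\<phi> p) = p"
    and "facet_defining K f g"
  shows "facet_defining K (f \<circ> \<phi>) (g \<circ> \<phi>)"
proof -
  let ?F = "{p \<in> K. f p = g p}"
  have "{p \<in> K. (f \<circ> \<phi>) p = (g \<circ> \<phi>) p} = \<phi> ` ?F"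
    using assms(2) inv by (auto simp: image_iff) (metis image_subset_iff)+
  moreover have "setdim (\<phi> ` ?F) = setdim ?F"
    using setdim_involution_image[OF assms(1)] inv by simp
  ultimately show ?thesis
    using assms(4) valid_ineq_compose[OF assms(2)] by (simp add: facet_defining_def)
qed

lemma scaleR_fun_apply [simp]: "(c *\<^sub>R f) j = c *\<^sub>R f j"
  by (simp add: scaleR_fun_def)

lemma sum_fun_apply: "(\<Sum>x\<in>A. f x) i = (\<Sum>x\<in>A. f x i)"
  by (induction A rule: infinite_finite_induct) auto

lemma in_span_scaled_diff:
  assumes "p \<in> span X" "q \<in> span X" "p - q = e *\<^sub>R v" "e \<noteq> 0"
  shows "v \<in> span X"
proof -
  have "(1 / e) *\<^sub>R (p - q) \<in> span X"
    using assms(1,2) by (intro span_scale span_diff)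
  then show ?thesis
    using assms(3,4) by simp
qed

section \<open>Validity at the points of P\<close>

lemma obtain_last_rise:
  fixes Q :: "nat \<Rightarrow> bool"
  assumes "c < t" and "\<not> Q c" and "Q t"
  obtains a where "c < a" "a \<le> t" "\<not> Q (a - 1)" "\<forall>i\<in>{a..t}. Q i"
  using assms
proof (induction t arbitrary: thesis)
  case (Suc t)
  show ?case
  proof (cases "Q t")
    case True
    with Suc.prems have "c < t"
      by (cases "c = t") auto
    then obtain a where "c < a" "a \<le> t" "\<not> Q (a - 1)" "\<forall>i\<in>{a..t}. Q i"
      using Suc.IH Suc.prems(3) True by blast
    then show ?thesis
      using Suc.prems(4) by (intro Suc.prems(1)[of a]) (auto simp: le_Suc_eq)
  next
    case False
    then show ?thesis
      using Suc.prems by (intro Suc.prems(1)[of "Suc t"]) auto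
  qed
qed simp

locale ramping =
  fixes T L l :: nat and Cu Cl V Vb :: real
  assumes Cl_pos: "0 < Cl" and V_pos: "0 < V" and Vb_V_le_Cu: "Vb + V \<le> Cu"
    and Cl_less_Vb: "Cl < Vb" and Vb_less: "Vb < Cl + V"
begin

abbreviation P :: "((nat \<Rightarrow> real) \<times> (nat \<Rightarrow> real)) set" where
  "P \<equiv> Pset T L l Cu Cl V Vb"

end

locale ramping_point = ramping +
  fixes x y :: "nat \<Rightarrow> real"
  assumes mem_P: "(x, y) \<in> P"
begin

lemma y_01: "y j = 0 \<or> y j = 1"
  using mem_P by (cases "j \<in> {1..T}") (auto simp: Pset_def)

lemma y_nonneg: "0 \<le> y j"
  using y_01[of j] by auto

lemma x_lower: "Cl * y j \<le> x j"
  using mem_P by (cases "j \<in> {1..T}") (auto simp: Pset_def)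

lemma x_upper: "x j \<le> Cu * y j"
  using mem_P by (cases "j \<in> {1..T}") (auto simp: Pset_def)

lemma x_off: "y j = 0 \<Longrightarrow> x j = 0"
  using x_lower[of j] x_upper[of j] by simp

lemma min_up:
  assumes "2 \<le> a" "y (a - 1) = 0" "y a = 1" "a \<le> j" "j \<le> T" "j < a + L"
  shows "y j = 1"
proof -
  have "a \<in> {2..T}" "j \<in> {a..min T (a + L - 1)}"
    using assms by auto
  then have "- y (a - 1) + y a - y j \<le> 0"
    using mem_P unfolding Pset_def by blast
  then show ?thesis
    using y_01[of j] assms(2,3) by auto
qed

lemma ramp_up_limit:
  "2 \<le> j \<Longrightarrow> j \<le> T \<Longrightarrow> x j - x (j - 1) \<le> V * y (j - 1) + Vb * (1 - y (j - 1))"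
  using mem_P unfolding Pset_def by auto

lemma ramp_down_limit:
  "2 \<le> j \<Longrightarrow> j \<le> T \<Longrightarrow> x (j - 1) - x j \<le> V * y j + Vb * (1 - y j)"
  using mem_P unfolding Pset_def by auto

lemma x_le_ramp:
  assumes "\<forall>i\<in>{a..<a + d}. y i = 1" "a + d \<le> T" "1 \<le> a"
  shows "x (a + d) \<le> x a + real d * V"
  using assms(1,2)
proof (induction d)
  case (Suc d)
  have "x (a + Suc d) - x (a + d) \<le> V"
    using ramp_up_limit[of "a + Suc d"] Suc.prems assms(3) by simp
  then show ?case
    using Suc by (simp add: algebra_simps)
qed simp

lemma x_le_startup_ramp:
  assumes "2 \<le> a" "y (a - 1) = 0" "\<forall>i\<in>{a..a + d}. y i = 1" "a + d \<le> T"
  shows "x (a + d) \<le> Vb + real d * V"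
proof -
  have "x a \<le> Vb"
    using ramp_up_limit[of a] assms x_off[of "a - 1"] by simp
  moreover have "x (a + d) \<le> x a + real d * V"
    using assms(1,3,4) by (intro x_le_ramp) auto
  ultimately show ?thesis
    by simp
qed

lemma x_le_shutdown_ramp:
  assumes "y (j + d + 1) = 0" "\<forall>i\<in>{j..j + d}. y i = 1" "j + d + 1 \<le> T" "1 \<le> j"
  shows "x j \<le> Vb + real d * V"
  using assms
proof (induction d arbitrary: j)
  case 0
  then show ?case
    using ramp_down_limit[of "j + 1"] x_off[of "j + 1"] by simp
next
  case (Suc d)
  have "x (j + 1) \<le> Vb + real d * V"
    using Suc.IH[of "j + 1"] Suc.prems by auto
  moreover have "x j - x (j + 1) \<le> V"
    using ramp_down_limit[of "j + 1"] Suc.prems by simp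
  ultimately show ?case
    by (simp add: algebra_simps)
qed

text \<open>If \<open>y\<close> stays on for all of \<open>t+1, \<dots>, t+m\<close> the sum below is \<open>m\<close>; otherwise the unit
  shuts down after \<open>t + j\<close> for some \<open>j < m\<close>, and ramping down bounds \<open>x t\<close> by \<open>Vb + j V\<close>,
  where \<open>j\<close> is at most the sum.\<close>

lemma onwards_sum_cases:
  assumes "y t = 1" "1 \<le> t" "t + m \<le> T"
  shows "(\<Sum>i=1..m. y (t + i)) = real m \<or> x t \<le> Vb + V * (\<Sum>i=1..m. y (t + i))"
proof (cases "\<forall>i\<in>{1..m}. y (t + i) = 1")
  case True
  then show ?thesis
    by simp
next
  case False
  then have "\<exists>j. j \<in> {1..m} \<and> y (t + j) = 0"
    using y_01 by blast
  then obtain j where j: "j \<in> {1..m}" "y (t + j) = 0"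
    and least: "\<forall>i<j. \<not> (i \<in> {1..m} \<and> y (t + i) = 0)"
    unfolding exists_least_iff[of "\<lambda>j. j \<in> {1..m} \<and> y (t + j) = 0"] by blast
  have before: "y (t + i) = 1" if "i < j" for i
    using least j(1) y_01[of "t + i"] assms(1) that by (cases "i = 0") auto
  have "x t \<le> Vb + real (j - 1) * V"
  proof (rule x_le_shutdown_ramp)
    show "\<forall>i\<in>{t..t + (j - 1)}. y i = 1"
    proof
      fix i assume "i \<in> {t..t + (j - 1)}"
      then show "y i = 1"
        using before[of "i - t"] j(1) by auto
    qed
  qed (use j assms in auto)
  moreover have "real (j - 1) \<le> (\<Sum>i=1..m. y (t + i))"
  proof -
    have "real (j - 1) = (\<Sum>i=1..<j. y (t + i))"
      using before by (simp add: sum.neutral)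
    also have "\<dots> \<le> (\<Sum>i=1..m. y (t + i))"
      using j(1) y_nonneg by (intro sum_mono2) auto
    finally show ?thesis .
  qed
  ultimately show ?thesis
    using V_pos by (auto simp: mult.commute intro: order.trans mult_left_mono)
qed

end

locale ineq1_point = ramping_point +
  fixes k m t :: nat and S :: "nat set"
  assumes m_less_k: "m < k" and k_less_t: "k < t" and t_m_le_T: "t + m \<le> T"
    and S_bounds: "\<forall>s\<in>S. s < k \<and> s + m < L"
begin

definition startup_credit :: "nat \<Rightarrow> real" where
  "startup_credit s = Cl + real (k - s) * V - Vb"

definition startup_sum :: real where
  "startup_sum = (\<Sum>s\<in>S. startup_credit s * (y (t - s) - y (t - s - 1)))"

definition onwards_sum :: real where
  "onwards_sum = (\<Sum>i=1..m. y (t + i))"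

lemma rhs1_eq:
  "rhs1 Cl V Vb k m S t (x, y)
     = (Cl + real (k - m) * V) * y t + V * onwards_sum - Cl * y (t - k) - startup_sum"
  by (simp add: rhs1_def startup_sum_def onwards_sum_def startup_credit_def)

lemma finite_S: "finite S"
  using S_bounds by (auto intro: finite_subset[of S "{..<k}"])

lemma k_minus_m_V: "real (k - m) * V = real k * V - real m * V" "V \<le> real (k - m) * V"
proof -
  show "real (k - m) * V = real k * V - real m * V"
    using m_less_k by (simp add: of_nat_diff left_diff_distrib)
  have "1 \<le> real (k - m)"
    using m_less_k by simp
  then show "V \<le> real (k - m) * V"
    using V_pos mult_right_mono[of 1 "real (k - m)" V] by simp
qed

lemma startup_credit_pos:
  assumes "s < k"
  shows "0 < startup_credit s"
proof -
  have "V \<le> real (k - s) * V"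
    using assms V_pos by simp
  then show ?thesis
    using Vb_less unfolding startup_credit_def by linarith
qed

text \<open>The hypothesis \<open>s + m < L\<close> is exactly what makes minimum up time carry a start-up at
  \<open>t - s\<close> through the whole window up to \<open>t + m\<close>.\<close>

lemma startup_in_S_stays_on:
  assumes "s \<in> S" "y (t - s - 1) = 0" "y (t - s) = 1" "t - s \<le> w" "w \<le> t + m"
  shows "y w = 1"
proof (rule min_up[of "t - s"])
  have "s < k" "s + m < L"
    using S_bounds assms(1) by auto
  then show "2 \<le> t - s" "w \<le> T" "w < t - s + L"
    using assms(4,5) k_less_t t_m_le_T by linarith+
qed (use assms(2-4) in \<open>simp_all add: diff_diff_add\<close>)

lemma startup_term_nonpos:
  assumes "s \<in> S" "t - s \<le> w" "w \<le> t + m" "y w = 0"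
  shows "startup_credit s * (y (t - s) - y (t - s - 1)) \<le> 0"
proof -
  have "y (t - s) - y (t - s - 1) \<le> 0"
    using startup_in_S_stays_on[OF assms(1) _ _ assms(2,3)] assms(4)
      y_01[of "t - s"] y_01[of "t - s - 1"] by fastforce
  then show ?thesis
    using startup_credit_pos[of s] S_bounds assms(1) by (simp add: mult_nonneg_nonpos)
qed

lemma valid_point_off:
  assumes "y t = 0"
  shows "lhs1 k t (x, y) \<le> rhs1 Cl V Vb k m S t (x, y)"
proof -
  have "startup_sum \<le> 0"
    unfolding startup_sum_def
    using startup_term_nonpos[of _ t] assms by (intro sum_nonpos) auto
  moreover have "0 \<le> V * onwards_sum"
    unfolding onwards_sum_def using y_nonneg V_pos by (simp add: sum_nonneg)
  ultimately show ?thesis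
    using assms x_off[of t] x_lower[of "t - k"] V_pos
    by (simp add: lhs1_def rhs1_eq)
qed

lemma valid_point_steady:
  assumes on: "\<forall>i\<in>{t - k..t}. y i = 1"
  shows "lhs1 k t (x, y) \<le> rhs1 Cl V Vb k m S t (x, y)"
proof -
  have "startup_sum = 0"
    unfolding startup_sum_def using on S_bounds by (intro sum.neutral) auto
  have y_t: "y t = 1" and y_tk: "y (t - k) = 1"
    using on k_less_t by auto
  have "x t \<le> x (t - k) + real k * V"
    using x_le_ramp[of "t - k" k] on k_less_t t_m_le_T by auto
  moreover have "Cl \<le> x (t - k)"
    using x_lower[of "t - k"] y_tk by simp
  moreover note k_minus_m_V
  moreover have "onwards_sum = real m \<or> x t \<le> Vb + V * onwards_sum"
    using onwards_sum_cases[OF y_t] k_less_t t_m_le_T unfolding onwards_sum_def by simp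
  ultimately show ?thesis
    using \<open>startup_sum = 0\<close> y_t y_tk Vb_less
    by (auto simp: lhs1_def rhs1_eq mult.commute[of V])
qed

lemma startup_sum_le_last_startup:
  assumes "y (a - 1) = 0" "\<forall>i\<in>{a..t}. y i = 1" "t - k < a" "a \<le> t"
  shows "startup_sum \<le> (if t - a \<in> S then startup_credit (t - a) else 0)"
proof -
  have "startup_sum \<le> (\<Sum>s\<in>S. if s = t - a then startup_credit (t - a) else 0)"
    unfolding startup_sum_def
  proof (rule sum_mono)
    fix s assume s: "s \<in> S"
    consider "s < t - a" | "s = t - a" | "t - a < s"
      by linarith
    then show "startup_credit s * (y (t - s) - y (t - s - 1))
        \<le> (if s = t - a then startup_credit (t - a) else 0)"
    proof cases
      case 1
      then show ?thesis
        using assms(2,4) by simp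
    next
      case 2
      then show ?thesis
        using assms by simp
    next
      case 3
      then have "t - s \<le> a - 1" "a - 1 \<le> t + m"
        using assms(4) by auto
      then show ?thesis
        using startup_term_nonpos[OF s, of "a - 1"] assms(1) 3 by auto
    qed
  qed
  also have "\<dots> = (if t - a \<in> S then startup_credit (t - a) else 0)"
    using finite_S by simp
  finally show ?thesis .
qed

lemma valid_point_startup:
  assumes off: "y (a - 1) = 0" and on: "\<forall>i\<in>{a..t}. y i = 1" and a: "t - k < a" "a \<le> t"
  shows "lhs1 k t (x, y) \<le> rhs1 Cl V Vb k m S t (x, y)"
proof -
  define r where "r = t - a"
  have r: "r < k" "a + r = t"
    using a k_less_t unfolding r_def by auto
  have y_t: "y t = 1"
    using on a by auto
  have x_t: "x t \<le> Vb + real r * V"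
    using x_le_startup_ramp[of a r] off on a r k_less_t t_m_le_T by auto
  have x_tk: "Cl * y (t - k) \<le> x (t - k)"
    by (rule x_lower)
  have D: "startup_sum \<le> (if r \<in> S then startup_credit r else 0)"
    using startup_sum_le_last_startup[OF off on a] unfolding r_def .
  note km = k_minus_m_V
  have rhs: "rhs1 Cl V Vb k m S t (x, y)
      = Cl + real k * V - real m * V + V * onwards_sum - Cl * y (t - k) - startup_sum"
    using y_t km(1) by (simp add: rhs1_eq)
  show ?thesis
  proof (cases "r \<in> S")
    case True
    then have "onwards_sum = real m"
      unfolding onwards_sum_def
      using startup_in_S_stays_on[of r] off on a r by (simp add: r_def)
    moreover have "startup_credit r = Cl + real k * V - real r * V - Vb"
      using r by (simp add: startup_credit_def of_nat_diff left_diff_distrib)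
    ultimately show ?thesis
      using True D x_t x_tk unfolding lhs1_def rhs by (simp add: mult.commute[of V])
  next
    case False
    have "real r * V \<le> real k * V - V"
      using r V_pos mult_right_mono[of "real r" "real k - 1" V] by (simp add: left_diff_distrib)
    moreover have "onwards_sum = real m \<or> x t \<le> Vb + V * onwards_sum"
      using onwards_sum_cases[OF y_t] k_less_t t_m_le_T unfolding onwards_sum_def by simp
    ultimately show ?thesis
      using False D x_t x_tk km Vb_less unfolding lhs1_def rhs by (auto simp: mult.commute[of V])
  qed
qed

theorem valid_point:
  "lhs1 k t (x, y) \<le> rhs1 Cl V Vb k m S t (x, y)"
proof (cases "y t = 0")
  case True
  then show ?thesis
    by (rule valid_point_off)
next
  case False
  then have y_t: "y t = 1"
    using y_01 by blast
  show ?thesis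
  proof (cases "\<forall>i\<in>{t - k..t}. y i = 1")
    case True
    then show ?thesis
      by (rule valid_point_steady)
  next
    case False
    then obtain c where c: "c \<in> {t - k..t}" "y c \<noteq> 1"
      by blast
    then have "c < t"
      using y_t le_neq_implies_less by fastforce
    then obtain a where "c < a" "a \<le> t" "\<not> y (a - 1) = 1" "\<forall>i\<in>{a..t}. y i = 1"
      using obtain_last_rise[of c t "\<lambda>i. y i = 1"] c(2) y_t by blast
    then show ?thesis
      using c(1) y_01[of "a - 1"] by (intro valid_point_startup[of a]) auto
  qed
qed

end

lemma linear_lhs1_minus_rhs1: "linear (\<lambda>p. lhs1 k t p - rhs1 Cl V Vb k m S t p)"
proof (rule linearI)
  fix p q :: "(nat \<Rightarrow> real) \<times> (nat \<Rightarrow> real)"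
  have "(\<Sum>i=1..m. snd (p + q) (t + i)) = (\<Sum>i=1..m. snd p (t + i)) + (\<Sum>i=1..m. snd q (t + i))"
    by (simp add: sum.distrib)
  moreover have "(\<Sum>s\<in>S. (Cl + real (k - s) * V - Vb) * (snd (p + q) (t - s) - snd (p + q) (t - s - 1)))
      = (\<Sum>s\<in>S. (Cl + real (k - s) * V - Vb) * (snd p (t - s) - snd p (t - s - 1)))
        + (\<Sum>s\<in>S. (Cl + real (k - s) * V - Vb) * (snd q (t - s) - snd q (t - s - 1)))"
    by (simp add: sum.distrib[symmetric] algebra_simps)
  ultimately show "lhs1 k t (p + q) - rhs1 Cl V Vb k m S t (p + q)
      = lhs1 k t p - rhs1 Cl V Vb k m S t p + (lhs1 k t q - rhs1 Cl V Vb k m S t q)"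
    unfolding lhs1_def rhs1_def by (simp only:) (simp add: algebra_simps)
next
  fix c :: real and p :: "(nat \<Rightarrow> real) \<times> (nat \<Rightarrow> real)"
  show "lhs1 k t (c *\<^sub>R p) - rhs1 Cl V Vb k m S t (c *\<^sub>R p) = c *\<^sub>R (lhs1 k t p - rhs1 Cl V Vb k m S t p)"
    by (simp add: lhs1_def rhs1_def scaleR_fun_def sum_distrib_left algebra_simps)
qed

context ramping
begin

lemma valid_ineq1:
  assumes "m < k" "k < t" "t + m \<le> T" "\<forall>s\<in>S. s < k \<and> s + m < L"
  shows "valid_ineq P (lhs1 k t) (rhs1 Cl V Vb k m S t)"
  unfolding valid_ineq_def
proof
  fix p assume "p \<in> P"
  then obtain x y where p: "p = (x, y)" "(x, y) \<in> P"
    by (cases p) auto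
  then interpret ineq1_point T L l Cu Cl V Vb x y k m t S
    using assms by unfold_locales
  show "lhs1 k t p \<le> rhs1 Cl V Vb k m S t p"
    using valid_point p(1) by simp
qed

end

section \<open>Time reversal\<close>

definition horizon :: "nat \<Rightarrow> ((nat \<Rightarrow> real) \<times> (nat \<Rightarrow> real)) set" where
  "horizon T = {p. \<forall>j. j \<notin> {1..T} \<longrightarrow> fst p j = 0 \<and> snd p j = 0}"

lemma subspace_horizon: "subspace (horizon T)"
  by (auto simp: subspace_def horizon_def)

lemma Pset_subset_horizon: "Pset T L l Cu Cl V Vb \<subseteq> horizon T"
  by (auto simp: Pset_def horizon_def)

definition reflect :: "nat \<Rightarrow> (nat \<Rightarrow> real) \<Rightarrow> nat \<Rightarrow> real" where
  "reflect T f j = (if j \<in> {1..T} then f (T + 1 - j) else 0)"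

definition reflect_point :: "nat \<Rightarrow> (nat \<Rightarrow> real) \<times> (nat \<Rightarrow> real) \<Rightarrow> (nat \<Rightarrow> real) \<times> (nat \<Rightarrow> real)"
  where "reflect_point T p = (reflect T (fst p), reflect T (snd p))"

lemma linear_reflect_point: "linear (reflect_point T)"
  by (rule linearI) (auto simp: reflect_point_def reflect_def fun_eq_iff)

lemma reflect_point_reflect_point: "p \<in> horizon T \<Longrightarrow> reflect_point T (reflect_point T p) = p"
  by (auto simp: reflect_point_def reflect_def horizon_def fun_eq_iff intro!: prod_eqI)

definition min_up_on :: "nat \<Rightarrow> nat \<Rightarrow> (nat \<Rightarrow> real) \<Rightarrow> bool" where
  "min_up_on T L z \<longleftrightarrow> (\<forall>t\<in>{2..T}. \<forall>k\<in>{t..min T (t + L - 1)}. - z (t - 1) + z t - z k \<le> 0)"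

lemma min_up_on_cong:
  assumes "\<And>j. j \<in> {1..T} \<Longrightarrow> z j = z' j"
  shows "min_up_on T L z \<longleftrightarrow> min_up_on T L z'"
proof -
  have "- z (t - 1) + z t - z k = - z' (t - 1) + z' t - z' k"
    if "t \<in> {2..T}" "k \<in> {t..min T (t + L - 1)}" for t k
  proof -
    have "t - 1 \<in> {1..T}" "t \<in> {1..T}" "k \<in> {1..T}"
      using that by auto
    then show ?thesis
      by (simp add: assms)
  qed
  then show ?thesis
    unfolding min_up_on_def by auto
qed

text \<open>Reversing time turns the start-up form of the minimum up time constraint into its
  shut-down form; for 0/1 sequences the two are equivalent, because a violating shut-down
  is preceded by a start-up at most \<open>L - 1\<close> steps earlier.\<close>

lemma min_up_on_reverse:
  assumes bin: "\<forall>j. z j = 0 \<or> z j = 1" and min_up: "min_up_on T L z"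
  shows "min_up_on T L (\<lambda>j. z (T + 1 - j))"
  unfolding min_up_on_def
proof (intro ballI)
  fix t k assume t: "t \<in> {2..T}" and k: "k \<in> {t..min T (t + L - 1)}"
  define u where "u = T + 2 - t"
  define c where "c = T + 1 - k"
  have idx: "T + 1 - (t - 1) = u" "T + 1 - t = u - 1" "T + 1 - k = c"
    using t unfolding u_def c_def by auto
  have u: "2 \<le> u" "u \<le> T" "1 \<le> c" "c \<le> u - 1" "u \<le> c + L"
    using k t unfolding u_def c_def by auto
  have "\<not> (z u = 0 \<and> z (u - 1) = 1 \<and> z c = 0)"
  proof
    assume viol: "z u = 0 \<and> z (u - 1) = 1 \<and> z c = 0"
    then have "c < u - 1"
      using u le_neq_implies_less by fastforce
    then obtain a where a: "c < a" "a \<le> u - 1" "\<not> z (a - 1) = 1" "\<forall>i\<in>{a..u - 1}. z i = 1"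
      using obtain_last_rise[of c "u - 1" "\<lambda>i. z i = 1"] viol by auto
    have "a \<in> {2..T}" "u \<in> {a..min T (a + L - 1)}"
      using a u by auto
    then have "- z (a - 1) + z a - z u \<le> 0"
      using min_up unfolding min_up_on_def by blast
    then show False
      using a viol bin[rule_format, of "a - 1"] u by auto
  qed
  then show "- z (T + 1 - (t - 1)) + z (T + 1 - t) - z (T + 1 - k) \<le> 0"
    unfolding idx using bin[rule_format, of u] bin[rule_format, of "u - 1"] bin[rule_format, of c]
    by auto
qed

lemma Pset_iff:
  "(x, y) \<in> Pset T L l Cu Cl V Vb \<longleftrightarrow>
     (\<forall>t. t \<notin> {1..T} \<longrightarrow> x t = 0 \<and> y t = 0) \<and>
     (\<forall>t\<in>{1..T}. x t \<ge> 0 \<and> (y t = 0 \<or> y t = 1)) \<and>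
     min_up_on T L y \<and> min_up_on T l (\<lambda>j. 1 - y j) \<and>
     (\<forall>t\<in>{1..T}. Cl * y t \<le> x t \<and> x t \<le> Cu * y t) \<and>
     (\<forall>t\<in>{2..T}. x t - x (t - 1) \<le> V * y (t - 1) + Vb * (1 - y (t - 1)) \<and>
                  x (t - 1) - x t \<le> V * y t + Vb * (1 - y t))"
  unfolding Pset_def min_up_on_def by (auto simp: algebra_simps)

lemma reflect_point_Pset:
  assumes "p \<in> Pset T L l Cu Cl V Vb"
  shows "reflect_point T p \<in> Pset T L l Cu Cl V Vb"
proof -
  obtain x y where p: "p = (x, y)"
    by fastforce
  let ?x = "reflect T x" and ?y = "reflect T y"
  note P = assms[unfolded p Pset_iff]
  have bin: "\<forall>j. y j = 0 \<or> y j = 1"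
    using P by (metis atLeastAtMost_iff)
  have "min_up_on T L ?y"
    using min_up_on_reverse[OF bin] P by (subst min_up_on_cong[of _ _ "\<lambda>j. y (T + 1 - j)"]) (auto simp: reflect_def)
  moreover have "min_up_on T l (\<lambda>j. 1 - ?y j)"
    using min_up_on_reverse[of "\<lambda>j. 1 - y j"] bin P
    by (subst min_up_on_cong[of _ _ "\<lambda>j. 1 - y (T + 1 - j)"]) (auto simp: reflect_def)
  moreover have "?x t - ?x (t - 1) \<le> V * ?y (t - 1) + Vb * (1 - ?y (t - 1)) \<and>
      ?x (t - 1) - ?x t \<le> V * ?y t + Vb * (1 - ?y t)" if "t \<in> {2..T}" for t
  proof -
    define u where "u = T + 2 - t"
    have u: "u \<in> {2..T}" "T + 1 - (t - 1) = u" "T + 1 - t = u - 1" "t - 1 \<in> {1..T}" "t \<in> {1..T}"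
      using that unfolding u_def by auto
    then have "x u - x (u - 1) \<le> V * y (u - 1) + Vb * (1 - y (u - 1)) \<and>
        x (u - 1) - x u \<le> V * y u + Vb * (1 - y u)"
      using P by blast
    then show ?thesis
      using u by (simp add: reflect_def)
  qed
  ultimately show ?thesis
    using P unfolding p reflect_point_def Pset_iff by (auto simp: reflect_def)
qed

lemma reflect_point_convex_hull_Pset:
  shows "reflect_point T ` (convex hull Pset T L l Cu Cl V Vb) \<subseteq> convex hull Pset T L l Cu Cl V Vb"
    and "\<forall>p\<in>convex hull Pset T L l Cu Cl V Vb. reflect_point T (reflect_point T p) = p"
proof -
  show "reflect_point T ` (convex hull Pset T L l Cu Cl V Vb) \<subseteq> convex hull Pset T L l Cu Cl V Vb"
    unfolding convex_hull_linear_image[OF linear_reflect_point]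
    using reflect_point_Pset by (intro hull_mono) blast
  have "convex hull Pset T L l Cu Cl V Vb \<subseteq> horizon T"
    using Pset_subset_horizon subspace_imp_convex[OF subspace_horizon] by (rule hull_minimal)
  then show "\<forall>p\<in>convex hull Pset T L l Cu Cl V Vb. reflect_point T (reflect_point T p) = p"
    using reflect_point_reflect_point by blast
qed

lemma lhs2_eq_lhs1_reflect:
  assumes "t \<in> {m+1..T-k}"
  shows "lhs2 k t = lhs1 k (T + 1 - t) \<circ> reflect_point T"
  using assms by (auto simp: lhs1_def lhs2_def reflect_point_def reflect_def fun_eq_iff)

lemma rhs2_eq_rhs1_reflect:
  assumes t: "t \<in> {m+1..T-k}" and S: "\<forall>s\<in>S. s < k"
  shows "rhs2 Cl V Vb k m S t = rhs1 Cl V Vb k m S (T + 1 - t) \<circ> reflect_point T"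
proof
  fix p
  have sum1: "(\<Sum>i=1..m. snd (reflect_point T p) (T + 1 - t + i)) = (\<Sum>i=1..m. snd p (t - i))"
  proof (rule sum.cong)
    fix i assume "i \<in> {1..m}"
    then have "T + 1 - t + i \<in> {1..T}" "T + 1 - (T + 1 - t + i) = t - i"
      using t by auto
    then show "snd (reflect_point T p) (T + 1 - t + i) = snd p (t - i)"
      by (simp add: reflect_point_def reflect_def)
  qed simp
  have sum2: "(\<Sum>s\<in>S. (Cl + real (k - s) * V - Vb)
        * (snd (reflect_point T p) (T + 1 - t - s) - snd (reflect_point T p) (T + 1 - t - s - 1)))
      = (\<Sum>s\<in>S. (Cl + real (k - s) * V - Vb) * (snd p (t + s) - snd p (t + s + 1)))"
  proof (rule sum.cong)
    fix s assume "s \<in> S"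
    then have "T + 1 - t - s \<in> {1..T}" "T + 1 - (T + 1 - t - s) = t + s"
        "T + 1 - t - s - 1 \<in> {1..T}" "T + 1 - (T + 1 - t - s - 1) = t + s + 1"
      using t S by auto
    then show "(Cl + real (k - s) * V - Vb)
        * (snd (reflect_point T p) (T + 1 - t - s) - snd (reflect_point T p) (T + 1 - t - s - 1))
      = (Cl + real (k - s) * V - Vb) * (snd p (t + s) - snd p (t + s + 1))"
      by (simp add: reflect_point_def reflect_def)
  qed simp
  have ends: "snd (reflect_point T p) (T + 1 - t) = snd p t"
      "snd (reflect_point T p) (T + 1 - t - k) = snd p (t + k)"
    using t by (auto simp: reflect_point_def reflect_def)
  show "rhs2 Cl V Vb k m S t p = (rhs1 Cl V Vb k m S (T + 1 - t) \<circ> reflect_point T) p"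
    unfolding rhs1_def rhs2_def comp_def sum1 sum2 ends ..
qed

section \<open>Facets\<close>

definition xunit :: "nat \<Rightarrow> (nat \<Rightarrow> real) \<times> (nat \<Rightarrow> real)" where
  "xunit j = (indicator {j}, 0)"

definition yunit :: "nat \<Rightarrow> (nat \<Rightarrow> real) \<times> (nat \<Rightarrow> real)" where
  "yunit j = (0, indicator {j})"

definition unit_vectors :: "nat \<Rightarrow> ((nat \<Rightarrow> real) \<times> (nat \<Rightarrow> real)) set" where
  "unit_vectors T = xunit ` {1..T} \<union> yunit ` {1..T}"

lemma sum_xunit: "finite A \<Longrightarrow> (\<Sum>j\<in>A. c j *\<^sub>R xunit j) = (\<lambda>i. if i \<in> A then c i else 0, 0)"
  by (auto simp: xunit_def fst_sum snd_sum sum_fun_apply indicator_def fun_eq_iff intro!: prod_eqI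
      cong: if_cong)

lemma sum_yunit: "finite A \<Longrightarrow> (\<Sum>j\<in>A. c j *\<^sub>R yunit j) = (0, \<lambda>i. if i \<in> A then c i else 0)"
  by (auto simp: yunit_def fst_sum snd_sum sum_fun_apply indicator_def fun_eq_iff intro!: prod_eqI
      cong: if_cong)

lemma horizon_subset_span_unit_vectors: "horizon T \<subseteq> span (unit_vectors T)"
proof
  fix p assume p: "p \<in> horizon T"
  have "(\<Sum>j\<in>{1..T}. fst p j *\<^sub>R xunit j) + (\<Sum>j\<in>{1..T}. snd p j *\<^sub>R yunit j) \<in> span (unit_vectors T)"
    by (intro span_add span_sum span_scale span_base) (auto simp: unit_vectors_def)
  moreover have "(\<Sum>j\<in>{1..T}. fst p j *\<^sub>R xunit j) + (\<Sum>j\<in>{1..T}. snd p j *\<^sub>R yunit j) = p"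
    using p by (auto simp: sum_xunit sum_yunit horizon_def fun_eq_iff intro!: prod_eqI)
  ultimately show "p \<in> span (unit_vectors T)"
    by simp
qed

lemma zero_in_Pset: "0 < Cl \<Longrightarrow> Cl < Vb \<Longrightarrow> 0 < V \<Longrightarrow> 0 \<in> Pset T L l Cu Cl V Vb"
  by (auto simp: Pset_def zero_prod_def)

context ramping
begin

lemma block_ramping_limits:
  fixes a b j :: nat and x :: "nat \<Rightarrow> real"
  defines "x' \<equiv> \<lambda>j. x j * indicator {a..b} j" and "y \<equiv> indicator {a..b} :: nat \<Rightarrow> real"
  assumes cap: "\<forall>j\<in>{a..b}. Cl \<le> x j"
    and start: "2 \<le> a \<Longrightarrow> x a \<le> Vb" and stop: "b < T \<Longrightarrow> x b \<le> Vb"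
    and ramp: "\<forall>j\<in>{a<..b}. \<bar>x j - x (j - 1)\<bar> \<le> V"
    and j: "j \<in> {2..T}"
  shows "x' j - x' (j - 1) \<le> V * y (j - 1) + Vb * (1 - y (j - 1))
    \<and> x' (j - 1) - x' j \<le> V * y j + Vb * (1 - y j)"
proof (cases "j - 1 \<in> {a..b}"; cases "j \<in> {a..b}")
  assume "j - 1 \<in> {a..b}" "j \<in> {a..b}"
  moreover from this have "j \<in> {a<..b}"
    using j by auto
  ultimately show ?thesis
    using ramp by (auto simp: x'_def y_def abs_le_iff)
next
  assume "j - 1 \<in> {a..b}" "j \<notin> {a..b}"
  moreover from this have "j - 1 = b" "b < T" "Cl \<le> x b"
    using j cap by auto
  ultimately show ?thesis
    using stop Cl_pos V_pos by (auto simp: x'_def y_def)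
next
  assume "j - 1 \<notin> {a..b}" "j \<in> {a..b}"
  moreover from this have "j = a" "2 \<le> a" "Cl \<le> x a"
    using j cap by auto
  ultimately show ?thesis
    using start Cl_pos V_pos by (auto simp: x'_def y_def)
next
  assume "j - 1 \<notin> {a..b}" "j \<notin> {a..b}"
  then show ?thesis
    using Cl_pos Cl_less_Vb by (simp add: x'_def y_def)
qed

text \<open>A single block of operation that touches the boundary of the horizon never violates the
  minimum up or down times, so only the capacity and ramping limits need checking.\<close>

lemma block_in_Pset:
  assumes ab: "1 \<le> a" "a \<le> b" "b \<le> T" "a = 1 \<or> b = T"
    and cap: "\<forall>j\<in>{a..b}. Cl \<le> x j \<and> x j \<le> Cu"
    and start: "2 \<le> a \<Longrightarrow> x a \<le> Vb" and stop: "b < T \<Longrightarrow> x b \<le> Vb"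
    and ramp: "\<forall>j\<in>{a<..b}. \<bar>x j - x (j - 1)\<bar> \<le> V"
  shows "(\<lambda>j. x j * indicator {a..b} j, indicator {a..b}) \<in> P"
proof -
  have "min_up_on T L (indicator {a..b})" "min_up_on T l (\<lambda>j. 1 - indicator {a..b} j)"
    using ab by (auto simp: min_up_on_def indicator_def)
  moreover have "0 \<le> x j" if "j \<in> {a..b}" for j
    using cap that Cl_pos by (meson less_imp_le order_trans)
  ultimately show ?thesis
    unfolding Pset_iff using ab cap block_ramping_limits[of a b x] start stop ramp
    by (auto simp: indicator_def)
qed

definition plateau :: "nat \<Rightarrow> nat \<Rightarrow> (nat \<Rightarrow> real) \<Rightarrow> (nat \<Rightarrow> real) \<times> (nat \<Rightarrow> real)" where
  "plateau a b d = (\<lambda>j. (Cl + d j) * indicator {a..b} j, indicator {a..b})"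

lemma plateau_in_Pset:
  assumes "1 \<le> a" "a \<le> b" "b \<le> T" "a = 1 \<or> b = T"
    and d: "\<forall>j. 0 \<le> d j \<and> d j \<le> V \<and> Cl + d j \<le> Vb"
  shows "plateau a b d \<in> P"
  unfolding plateau_def
proof (rule block_in_Pset)
  show "\<forall>j\<in>{a..b}. Cl \<le> Cl + d j \<and> Cl + d j \<le> Cu"
    using d Vb_V_le_Cu V_pos by (smt (verit))
  show "\<forall>j\<in>{a<..b}. \<bar>Cl + d j - (Cl + d (j - 1))\<bar> \<le> V"
    using d by (smt (verit))
qed (use assms in auto)

text \<open>With truncated subtraction, \<open>ramp base a r\<close> stays at \<open>base\<close> up to time \<open>a\<close>, then
  rises by \<open>V\<close> per period for \<open>r\<close> periods and stays flat afterwards.\<close>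

definition ramp :: "real \<Rightarrow> nat \<Rightarrow> nat \<Rightarrow> nat \<Rightarrow> real" where
  "ramp base a r j = base + V * real (min r (j - a))"

lemma ramp_bounds: "base \<le> ramp base a r j \<and> ramp base a r j \<le> base + real r * V"
  using V_pos by (simp add: ramp_def mult.commute)

lemma ramp_step: "\<bar>ramp base a r j - ramp base a r (j - 1)\<bar> \<le> V"
proof -
  have "min r (j - a) = min r (j - 1 - a) \<or> min r (j - a) = min r (j - 1 - a) + 1"
    by linarith
  then show ?thesis
    using V_pos by (auto simp: ramp_def algebra_simps)
qed

lemma ramp_flat: "j \<le> a \<or> a + r < j \<Longrightarrow> ramp base a r j = ramp base a r (j - 1)"
  by (auto simp: ramp_def min_def)

end

locale ineq1_facet = ramping +
  fixes k t :: nat and S :: "nat set"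
  assumes k_pos: "1 \<le> k" and k_less_t: "k < t" and t_le_T: "t \<le> T"
    and ramp_fits: "Cl + real k * V < Cu"
    and S_bounds: "\<forall>s\<in>S. s < k \<and> s < L"
    and S_no_zero: "2 \<le> k \<Longrightarrow> 0 \<notin> S"
begin

lemma horizon_indices: "t \<in> {1..T}" "t - k \<in> {1..T}"
  using k_less_t t_le_T by auto

abbreviation face :: "((nat \<Rightarrow> real) \<times> (nat \<Rightarrow> real)) set" where
  "face \<equiv> {p \<in> P. lhs1 k t p = rhs1 Cl V Vb k 0 S t p}"

definition eps :: real where
  "eps = min V (min (Vb - Cl) (Cu - Cl - real k * V))"

lemma eps: "0 < eps" "eps \<le> V" "Cl + eps \<le> Vb" "Cl + real k * V + eps \<le> Cu"
  using V_pos Cl_less_Vb ramp_fits unfolding eps_def by auto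

definition full_ramp :: "(nat \<Rightarrow> real) \<Rightarrow> (nat \<Rightarrow> real) \<times> (nat \<Rightarrow> real)" where
  "full_ramp d = (\<lambda>j. (ramp Cl (t - k) k j + d j) * indicator {1..T} j, indicator {1..T})"

definition late_start :: "nat \<Rightarrow> (nat \<Rightarrow> real) \<times> (nat \<Rightarrow> real)" where
  "late_start s = (\<lambda>j. ramp Vb (t - s) s j * indicator {t - s..T} j, indicator {t - s..T})"

lemma full_ramp_shift_in_Pset:
  assumes "0 \<le> \<delta>" "\<delta> \<le> eps"
  shows "full_ramp (\<lambda>_. \<delta>) \<in> P"
  unfolding full_ramp_def
proof (rule block_in_Pset)
  show "\<forall>j\<in>{1..T}. Cl \<le> ramp Cl (t - k) k j + \<delta> \<and> ramp Cl (t - k) k j + \<delta> \<le> Cu"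
    using ramp_bounds[of Cl "t - k" k] assms eps(4) by (smt (verit))
  show "\<forall>j\<in>{1<..T}. \<bar>ramp Cl (t - k) k j + \<delta> - (ramp Cl (t - k) k (j - 1) + \<delta>)\<bar> \<le> V"
    using ramp_step by simp
qed (use k_less_t t_le_T in auto)

lemma full_ramp_bump_in_Pset:
  assumes c: "c < t - k \<or> t < c"
  shows "full_ramp (\<lambda>j. eps * indicator {c} j) \<in> P"
  unfolding full_ramp_def
proof (rule block_in_Pset)
  let ?r = "ramp Cl (t - k) k"
  show "\<forall>j\<in>{1..T}. Cl \<le> ?r j + eps * indicator {c} j \<and> ?r j + eps * indicator {c} j \<le> Cu"
    using ramp_bounds[of Cl "t - k" k] eps by (auto simp: indicator_def) (smt (verit))+
  show "\<forall>j\<in>{1<..T}. \<bar>?r j + eps * indicator {c} j - (?r (j - 1) + eps * indicator {c} (j - 1))\<bar> \<le> V"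
  proof
    fix j assume j: "j \<in> {1<..T}"
    show "\<bar>?r j + eps * indicator {c} j - (?r (j - 1) + eps * indicator {c} (j - 1))\<bar> \<le> V"
    proof (cases "j = c \<or> j - 1 = c")
      case True
      then have "?r j = ?r (j - 1)"
        using c j k_less_t by (intro ramp_flat) auto
      then show ?thesis
        using True j eps by (auto simp: indicator_def)
    next
      case False
      then show ?thesis
        using ramp_step[of Cl "t - k" k j] by simp
    qed
  qed
qed (use k_less_t t_le_T in auto)

lemma late_start_in_Pset:
  assumes "s \<in> S"
  shows "late_start s \<in> P"
  unfolding late_start_def
proof (rule block_in_Pset)
  have "s < k"
    using S_bounds assms by auto
  then have "Vb + real s * V \<le> Cu"
    using Vb_less ramp_fits V_pos mult_right_mono[of "real s + 1" "real k" V]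
    by (simp add: distrib_right)
  then show "\<forall>j\<in>{t - s..T}. Cl \<le> ramp Vb (t - s) s j \<and> ramp Vb (t - s) s j \<le> Cu"
    using ramp_bounds[of Vb "t - s" s] Cl_less_Vb by (smt (verit))
  show "\<forall>j\<in>{t - s<..T}. \<bar>ramp Vb (t - s) s j - ramp Vb (t - s) s (j - 1)\<bar> \<le> V"
    using ramp_step by simp
qed (use assms S_bounds k_less_t t_le_T in \<open>auto simp: ramp_def\<close>)

lemma rhs1_no_startup:
  assumes "\<forall>s\<in>S. snd p (t - s) = snd p (t - s - 1)"
  shows "rhs1 Cl V Vb k 0 S t p = (Cl + real k * V) * snd p t - Cl * snd p (t - k)"
  using assms by (simp add: rhs1_def)

lemma full_ramp_in_face:
  assumes "full_ramp d \<in> P" "d t = d (t - k)"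
  shows "full_ramp d \<in> face"
proof -
  have "ramp Cl (t - k) k t = Cl + real k * V" "ramp Cl (t - k) k (t - k) = Cl"
    using k_less_t by (auto simp: ramp_def)
  moreover have "\<forall>s\<in>S. snd (full_ramp d) (t - s) = snd (full_ramp d) (t - s - 1)"
    using S_bounds k_less_t t_le_T by (auto simp: full_ramp_def indicator_def)
  ultimately show ?thesis
    using assms horizon_indices by (simp add: rhs1_no_startup lhs1_def full_ramp_def algebra_simps)
qed

lemma plateau_before_in_face:
  assumes "plateau 1 b d \<in> P" "b < t" "\<forall>s\<in>S. b \<noteq> t - s - 1" "d (t - k) = 0"
  shows "plateau 1 b d \<in> face"
proof -
  have "\<forall>s\<in>S. snd (plateau 1 b d) (t - s) = snd (plateau 1 b d) (t - s - 1)"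
    using assms(3) S_bounds k_less_t by (auto simp: plateau_def indicator_def)
  then show ?thesis
    using assms by (simp add: rhs1_no_startup lhs1_def plateau_def indicator_def)
qed

lemma plateau_after_in_face:
  assumes "plateau a T d \<in> P" "t < a"
  shows "plateau a T d \<in> face"
proof -
  have "\<forall>s\<in>S. snd (plateau a T d) (t - s) = snd (plateau a T d) (t - s - 1)"
    using assms(2) by (auto simp: plateau_def)
  then show ?thesis
    using assms by (simp add: rhs1_no_startup lhs1_def plateau_def)
qed

text \<open>Starting up at \<open>t - s\<close> for \<open>s \<in> S\<close> and ramping up at full speed reaches
  \<open>Vb + s V\<close> at time \<open>t\<close>, which is exactly the right-hand side after the credit of \<open>s\<close>.\<close>

lemma late_start_in_face:
  assumes s: "s \<in> S"
  shows "late_start s \<in> face"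
proof -
  have "s < k"
    using S_bounds s by auto
  have steps: "(\<Sum>s'\<in>S. (Cl + real (k - s') * V - Vb)
      * (snd (late_start s) (t - s') - snd (late_start s) (t - s' - 1)))
    = (\<Sum>s'\<in>S. if s' = s then Cl + real (k - s) * V - Vb else 0)"
  proof (rule sum.cong)
    fix s' assume "s' \<in> S"
    then have "s' < k"
      using S_bounds by auto
    then have "snd (late_start s) (t - s') = (if s' \<le> s then 1 else 0)"
        "snd (late_start s) (t - s' - 1) = (if s' < s then 1 else 0)"
      using \<open>s < k\<close> k_less_t t_le_T by (auto simp: late_start_def indicator_def)
    then show "(Cl + real (k - s') * V - Vb)
        * (snd (late_start s) (t - s') - snd (late_start s) (t - s' - 1))
      = (if s' = s then Cl + real (k - s) * V - Vb else 0)"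
      by auto
  qed simp
  have "finite S"
    using S_bounds by (auto intro: finite_subset[of S "{..<k}"])
  then have "rhs1 Cl V Vb k 0 S t (late_start s) = (Cl + real k * V) - (Cl + real (k - s) * V - Vb)"
    using steps s \<open>s < k\<close> k_less_t t_le_T by (simp add: rhs1_def late_start_def)
  moreover have "lhs1 k t (late_start s) = Vb + real s * V"
    using \<open>s < k\<close> k_less_t t_le_T by (simp add: lhs1_def late_start_def ramp_def)
  ultimately show ?thesis
    using late_start_in_Pset[OF s] \<open>s < k\<close> by (simp add: of_nat_diff algebra_simps)
qed

abbreviation face_span :: "((nat \<Rightarrow> real) \<times> (nat \<Rightarrow> real)) set" where
  "face_span \<equiv> span (insert (xunit t) face)"

lemma face_subset_face_span: "p \<in> face \<Longrightarrow> p \<in> face_span"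
  by (intro span_base) auto

lemma flat_ramp_in_face: "full_ramp (\<lambda>_. 0) \<in> face"
  using full_ramp_shift_in_Pset[of 0] eps(1) by (intro full_ramp_in_face) auto

lemma xunit_off_ramp_in_face_span:
  assumes c: "c \<in> {1..T}" "c < t - k \<or> t < c"
  shows "xunit c \<in> face_span"
proof (rule in_span_scaled_diff)
  show "full_ramp (\<lambda>j. eps * indicator {c} j) \<in> face_span"
    using c full_ramp_bump_in_Pset[OF c(2)]
    by (intro face_subset_face_span full_ramp_in_face) (auto simp: indicator_def)
  show "full_ramp (\<lambda>_. 0) \<in> face_span"
    using flat_ramp_in_face by (rule face_subset_face_span)
  show "full_ramp (\<lambda>j. eps * indicator {c} j) - full_ramp (\<lambda>_. 0) = eps *\<^sub>R xunit c"
    using c(1) by (auto simp: full_ramp_def xunit_def fun_eq_iff indicator_def)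
qed (use eps(1) in simp)

lemma xunit_on_ramp_in_face_span:
  assumes c: "t - k < c" "c < t"
  shows "xunit c \<in> face_span"
proof (rule in_span_scaled_diff)
  have "0 \<notin> S"
    using c S_no_zero by auto
  have no_step: "\<forall>s\<in>S. t - 1 \<noteq> t - s - 1"
  proof
    fix s assume "s \<in> S"
    then have "0 < s" "s < t"
      using \<open>0 \<notin> S\<close> S_bounds k_less_t by (auto intro: Nat.gr0I)
    then show "t - 1 \<noteq> t - s - 1"
      by linarith
  qed
  have "plateau 1 (t - 1) d \<in> face" if "d = (\<lambda>_. 0) \<or> d = (\<lambda>j. eps * indicator {c} j)" for d
  proof (rule plateau_before_in_face)
    show "plateau 1 (t - 1) d \<in> P"
      using that k_pos k_less_t t_le_T eps V_pos Cl_less_Vb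
      by (intro plateau_in_Pset) (auto simp: indicator_def)
  qed (use that no_step c k_less_t in \<open>auto simp: indicator_def\<close>)
  then show "plateau 1 (t - 1) (\<lambda>j. eps * indicator {c} j) \<in> face_span"
      "plateau 1 (t - 1) (\<lambda>_. 0) \<in> face_span"
    using face_subset_face_span by blast+
  show "plateau 1 (t - 1) (\<lambda>j. eps * indicator {c} j) - plateau 1 (t - 1) (\<lambda>_. 0) = eps *\<^sub>R xunit c"
    using c by (auto simp: plateau_def xunit_def fun_eq_iff indicator_def)
qed (use eps(1) in simp)

lemma sum_xunit_in_face_span: "(\<Sum>j\<in>{1..T}. xunit j) \<in> face_span"
proof (rule in_span_scaled_diff)
  show "full_ramp (\<lambda>_. eps) \<in> face_span"
    using full_ramp_shift_in_Pset[of eps] eps(1)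
    by (intro face_subset_face_span full_ramp_in_face) auto
  show "full_ramp (\<lambda>_. 0) \<in> face_span"
    using flat_ramp_in_face by (rule face_subset_face_span)
  show "full_ramp (\<lambda>_. eps) - full_ramp (\<lambda>_. 0) = eps *\<^sub>R (\<Sum>j\<in>{1..T}. xunit j)"
    using sum_xunit[of "{1..T}" "\<lambda>_. 1"] by (auto simp: full_ramp_def fun_eq_iff indicator_def)
qed (use eps(1) in simp)

text \<open>Besides \<open>x t\<close>, which is the extra direction, the only \<open>x\<close>-coordinate not reached by
  perturbing a single point of the face is \<open>x (t - k)\<close>; it is recovered from the all-ones
  direction.\<close>

lemma xunit_in_face_span:
  assumes c: "c \<in> {1..T}"
  shows "xunit c \<in> face_span"
proof -
  have others: "xunit j \<in> face_span" if "j \<in> {1..T}" "j \<noteq> t - k" for j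
  proof -
    have "j < t - k \<or> t < j \<or> (t - k < j \<and> j < t) \<or> j = t"
      using that(2) by linarith
    then consider "j < t - k \<or> t < j" | "t - k < j \<and> j < t" | "j = t"
      by blast
    then show ?thesis
    proof cases
      case 3
      then show ?thesis
        by (simp add: span_base)
    qed (use that xunit_off_ramp_in_face_span xunit_on_ramp_in_face_span in auto)
  qed
  show ?thesis
  proof (cases "c = t - k")
    case True
    have "(\<Sum>j\<in>{1..T}. xunit j) - (\<Sum>j\<in>{1..T} - {t - k}. xunit j) \<in> face_span"
      using others by (intro span_diff[OF sum_xunit_in_face_span] span_sum) auto
    moreover have "(\<Sum>j\<in>{1..T}. xunit j) = xunit (t - k) + (\<Sum>j\<in>{1..T} - {t - k}. xunit j)"
      using horizon_indices(2) by (intro sum.remove) auto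
    ultimately show ?thesis
      using True by simp
  qed (use c others in auto)
qed

lemma x_part_in_face_span:
  assumes "p \<in> horizon T"
  shows "(fst p, 0) \<in> face_span"
proof -
  have "(\<Sum>j\<in>{1..T}. fst p j *\<^sub>R xunit j) \<in> face_span"
    using xunit_in_face_span by (intro span_sum span_scale) auto
  moreover have "(\<Sum>j\<in>{1..T}. fst p j *\<^sub>R xunit j) = (fst p, 0)"
    using assms by (auto simp: sum_xunit horizon_def fun_eq_iff)
  ultimately show ?thesis
    by simp
qed

lemma y_part_in_face_span:
  assumes "p \<in> face"
  shows "(0, snd p) \<in> face_span"
proof -
  have "p - (fst p, 0) \<in> face_span"
    using assms Pset_subset_horizon x_part_in_face_span face_subset_face_span
    by (blast intro: span_diff)
  moreover have "p - (fst p, 0) = (0, snd p)"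
    by (cases p) simp
  ultimately show ?thesis
    by simp
qed

lemma idle_head_in_face:
  assumes a: "2 \<le> a" "a \<le> t" "t - a \<notin> S"
  shows "plateau 1 (a - 1) (\<lambda>_. 0) \<in> face"
proof (rule plateau_before_in_face)
  show "plateau 1 (a - 1) (\<lambda>_. 0) \<in> P"
    using a t_le_T V_pos Cl_less_Vb by (intro plateau_in_Pset) auto
  show "\<forall>s\<in>S. a - 1 \<noteq> t - s - 1"
  proof
    fix s assume s: "s \<in> S"
    then have "s < t"
      using S_bounds k_less_t by auto
    then have "a - 1 = t - s - 1 \<Longrightarrow> s = t - a"
      using a by linarith
    then show "a - 1 \<noteq> t - s - 1"
      using a s by blast
  qed
qed (use a in auto)

lemma y_tail_in_face_span:
  assumes a: "1 \<le> a" "a \<le> T + 1"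
  shows "(0, indicator {a..T}) \<in> face_span"
proof -
  have full: "(0, indicator {1..T}) \<in> face_span"
    using y_part_in_face_span[OF flat_ramp_in_face] by (simp add: full_ramp_def)
  consider "a = 1" | "2 \<le> a" "a \<le> t" "t - a \<in> S" | "2 \<le> a" "a \<le> t" "t - a \<notin> S"
    | "t < a" "a \<le> T" | "a = T + 1"
    using a by linarith
  then show ?thesis
  proof cases
    case 2
    then have "t - (t - a) = a"
      by simp
    then show ?thesis
      using y_part_in_face_span[OF late_start_in_face[OF 2(3)]] by (simp add: late_start_def)
  next
    case 3
    from y_part_in_face_span[OF idle_head_in_face[OF 3]]
    have "(0, indicator {1..a - 1}) \<in> face_span"
      by (simp add: plateau_def)
    with full have "(0, indicator {1..T}) - (0, indicator {1..a - 1}) \<in> face_span"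
      by (rule span_diff)
    moreover have "(0, indicator {1..T}) - (0, indicator {1..a - 1})
        = ((0, indicator {a..T}) :: (nat \<Rightarrow> real) \<times> (nat \<Rightarrow> real))"
      using 3 t_le_T by (auto simp: indicator_def fun_eq_iff)
    ultimately show ?thesis
      by simp
  next
    case 4
    have "plateau a T (\<lambda>_. 0) \<in> face"
      using 4 k_less_t V_pos Cl_less_Vb by (intro plateau_after_in_face plateau_in_Pset) auto
    from y_part_in_face_span[OF this] show ?thesis
      by (simp add: plateau_def)
  next
    case 5
    then have "(0, indicator {a..T}) = (0 :: (nat \<Rightarrow> real) \<times> (nat \<Rightarrow> real))"
      by (simp add: zero_prod_def fun_eq_iff)
    then show ?thesis
      by (simp add: span_zero)
  qed (use full in simp)
qed

lemma unit_vectors_subset_face_span: "unit_vectors T \<subseteq> face_span"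
proof -
  have "yunit j \<in> face_span" if "j \<in> {1..T}" for j
  proof -
    have "(0, indicator {j..T}) - (0, indicator {j + 1..T}) \<in> face_span"
      using that by (intro span_diff y_tail_in_face_span) auto
    moreover have "(0, indicator {j..T}) - (0, indicator {j + 1..T}) = yunit j"
      using that by (auto simp: yunit_def indicator_def fun_eq_iff)
    ultimately show ?thesis
      by simp
  qed
  then show ?thesis
    unfolding unit_vectors_def using xunit_in_face_span by blast
qed

lemma xunit_in_span_Pset: "xunit t \<in> span P"
proof (rule in_span_scaled_diff)
  show "plateau 1 T (\<lambda>j. eps * indicator {t} j) \<in> span P" "plateau 1 T (\<lambda>_. 0) \<in> span P"
    using t_le_T k_less_t eps V_pos Cl_less_Vb
    by (auto intro!: span_base plateau_in_Pset simp: indicator_def)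
  show "plateau 1 T (\<lambda>j. eps * indicator {t} j) - plateau 1 T (\<lambda>_. 0) = eps *\<^sub>R xunit t"
    using horizon_indices(1) by (auto simp: plateau_def xunit_def fun_eq_iff indicator_def)
qed (use eps(1) in simp)

theorem facet_defining_ineq1:
  "facet_defining (convex hull P) (lhs1 k t) (rhs1 Cl V Vb k 0 S t)"
proof (rule facet_defining_convex_hullI)
  show "finite (unit_vectors T)"
    by (simp add: unit_vectors_def)
  show "P \<subseteq> span (unit_vectors T)"
    using Pset_subset_horizon horizon_subset_span_unit_vectors by blast
  show "0 \<in> P"
    using Cl_pos Cl_less_Vb V_pos by (rule zero_in_Pset)
  show "linear (\<lambda>p. lhs1 k t p - rhs1 Cl V Vb k 0 S t p)"
    by (rule linear_lhs1_minus_rhs1)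
  show "valid_ineq P (lhs1 k t) (rhs1 Cl V Vb k 0 S t)"
    using k_pos k_less_t t_le_T S_bounds by (intro valid_ineq1) auto
  show "xunit t \<in> span P"
    by (rule xunit_in_span_Pset)
  show "lhs1 k t (xunit t) \<noteq> rhs1 Cl V Vb k 0 S t (xunit t)"
    using k_pos k_less_t by (simp add: lhs1_def rhs1_def xunit_def indicator_def)
  show "unit_vectors T \<subseteq> face_span"
    by (rule unit_vectors_subset_face_span)
qed

end

theorem proposition9:
  fixes T L l k m :: nat and Cu Cl V Vb :: real and S :: "nat set"
  assumes "T > 0" "L > 0" "l > 0"
    and "Cu > Cl" "Cl > 0" "V > 0" "Vb + V \<le> Cu" "Cl < Vb" "Vb < Cl + V"
    and "1 \<le> k" "k \<le> T - 1" "Cu - Cl - real k * V > 0"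
    and "m \<le> k - 1"
    and "\<forall>s\<in>S. s \<le> k - 1 \<and> int s \<le> int L - int m - 1"
  shows "(\<forall>t\<in>{k+1..T-m}. valid_ineq (convex hull (Pset T L l Cu Cl V Vb))
              (lhs1 k t) (rhs1 Cl V Vb k m S t))
       \<and> (\<forall>t\<in>{m+1..T-k}. valid_ineq (convex hull (Pset T L l Cu Cl V Vb))
              (lhs2 k t) (rhs2 Cl V Vb k m S t))
       \<and> ((m = 0 \<and> (\<forall>s\<in>S. s \<ge> min (k - 1) 1)) \<longrightarrow>
            (\<forall>t\<in>{k+1..T-m}. facet_defining (convex hull (Pset T L l Cu Cl V Vb))
              (lhs1 k t) (rhs1 Cl V Vb k m S t))
          \<and> (\<forall>t\<in>{m+1..T-k}. facet_defining (convex hull (Pset T L l Cu Cl V Vb))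
              (lhs2 k t) (rhs2 Cl V Vb k m S t)))"
proof -
  interpret ramping T L l Cu Cl V Vb
    using assms by unfold_locales auto
  have m: "m < k" and S: "\<forall>s\<in>S. s < k \<and> s + m < L"
    using assms(10,13,14) by auto
  have valid1: "valid_ineq (convex hull P) (lhs1 k t) (rhs1 Cl V Vb k m S t)" if "t \<in> {k+1..T-m}" for t
    using that m S by (intro valid_ineq_convex_hull linear_lhs1_minus_rhs1 valid_ineq1) auto
  have facet1: "facet_defining (convex hull P) (lhs1 k t) (rhs1 Cl V Vb k m S t)"
    if "m = 0" "\<forall>s\<in>S. min (k - 1) 1 \<le> s" "t \<in> {k+1..T-m}" for t
  proof -
    interpret ineq1_facet T L l Cu Cl V Vb k t S
      using that assms(10,12) S by unfold_locales auto
    show ?thesis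
      using facet_defining_ineq1 that(1) by simp
  qed
  have reflected: "lhs2 k t = lhs1 k (T + 1 - t) \<circ> reflect_point T"
      "rhs2 Cl V Vb k m S t = rhs1 Cl V Vb k m S (T + 1 - t) \<circ> reflect_point T"
      "T + 1 - t \<in> {k+1..T-m}" if "t \<in> {m+1..T-k}" for t
    using that S lhs2_eq_lhs1_reflect rhs2_eq_rhs1_reflect by auto
  note symmetry = reflect_point_convex_hull_Pset[of T L l Cu Cl V Vb]
  show ?thesis
    using valid1 facet1 reflected
      valid_ineq_compose[OF symmetry(1)]
      facet_defining_compose_involution[OF linear_reflect_point symmetry]
    by auto
qed

end
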